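(* Consider the asynchronous $(n,k)$ game on the complete graph with agent set $[n]$ consisting of $n_r$ rejectors, $n_c$ consentors and $n-n_r-n_c\ge 2$ majority followers, with threshold satisfying $n_c<k\le n-n_r$. Then the probability that a decision is never made in finite time, i.e. $P\big(\sum_{i\in[n]}x_i(t)<k \text{ for all } t\ge 0\big)$, is at most $$\frac{(n-n_c-n_r)(n+n_c+n_r-1)+4n_cn_r}{4n_c(n-n_c)}.$$
   Context: Each agent $i\in[n]$ holds an opinion $x_i(t)\in\{0,1\}$ at time $t=0,1,2,\dots$. The social graph is complete: every agent's social neighbors are all the other $n-1$ agents. In the $(n,k)$ game a decision is made at time $t$ if $\sum_{i\in[n]}x_i(t)\ge k$. The game is asynchronous: at each time step a single agent, chosen uniformly at random from $[n]$ (independently of the past), updates its opinion, and all other opinions stay the same. A rejector holds opinion $0$ at all times; a consentor holds opinion $1$ at all times. A majority follower has initial opinion distributed as Bernoulli$(1/2)$ (independently across agents), and when it updates it adopts the majority opinion among its social neighbors (the other $n-1$ agents). *)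

theory Defs
  imports "HOL-Probability.Probability"
begin

datatype agent_kind = Rejector | Consentor | Follower

definition num_kind :: "nat \<Rightarrow> (nat \<Rightarrow> agent_kind) \<Rightarrow> agent_kind \<Rightarrow> nat" where
  "num_kind n kind a = card {i. i < n \<and> kind i = a}"

definition init_op :: "(nat \<Rightarrow> agent_kind) \<Rightarrow> (nat \<Rightarrow> bool) \<Rightarrow> nat \<Rightarrow> bool" where
  "init_op kind b i = (case kind i of Rejector \<Rightarrow> False | Consentor \<Rightarrow> True | Follower \<Rightarrow> b i)"

text \<open>Update of agent j in the configuration x (complete graph on 0..n-1).\<close>
definition update :: "nat \<Rightarrow> (nat \<Rightarrow> agent_kind) \<Rightarrow> (nat \<Rightarrow> bool) \<Rightarrow> nat \<Rightarrow> (nat \<Rightarrow> bool)" where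
  "update n kind x j = x(j :=
     (case kind j of
        Rejector \<Rightarrow> False
      | Consentor \<Rightarrow> True
      | Follower \<Rightarrow>
          (let c1 = card {i. i < n \<and> i \<noteq> j \<and> x i};
               c0 = card {i. i < n \<and> i \<noteq> j \<and> \<not> x i}
           in if c1 > c0 then True else if c0 > c1 then False else x j)))"

fun traj :: "nat \<Rightarrow> (nat \<Rightarrow> agent_kind) \<Rightarrow> (nat \<Rightarrow> bool) \<Rightarrow> nat stream \<Rightarrow> nat \<Rightarrow> (nat \<Rightarrow> bool)" where
  "traj n kind b \<omega> 0 = init_op kind b"
| "traj n kind b \<omega> (Suc t) = update n kind (traj n kind b \<omega> t) (\<omega> !! t)"

definition ones :: "nat \<Rightarrow> (nat \<Rightarrow> bool) \<Rightarrow> nat" where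
  "ones n x = card {i. i < n \<and> x i}"

text \<open>Probability space: independent fair bits for initial opinions (Bernoulli(1/2)
  per agent, only used for followers), paired with an i.i.d. sequence of uniformly
  chosen updating agents from {0..<n}.\<close>
definition game_space :: "nat \<Rightarrow> ((nat \<Rightarrow> bool) \<times> nat stream) measure" where
  "game_space n = measure_pmf (Pi_pmf {0..<n} False (\<lambda>_. bernoulli_pmf (1/2)))
                   \<Otimes>\<^sub>M stream_space (measure_pmf (pmf_of_set {0..<n}))"

definition no_decision :: "nat \<Rightarrow> nat \<Rightarrow> (nat \<Rightarrow> agent_kind) \<Rightarrow> ((nat \<Rightarrow> bool) \<times> nat stream) set" where
  "no_decision n k kind = {(b, \<omega>) \<in> space (game_space n).
       \<forall>t. ones n (traj n kind b \<omega> t) < k}"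

end

theory Submission
  imports Defs
begin

(* If more than half of the agents start with opinion 1, this majority is never lost: rejectors and
   consentors never change, and an updating follower sees at least as many ones as zeros among the
   others (a tie keeps its current opinion), so opinions only move from 0 to 1. Almost surely every
   agent is selected at some time, after which every non-rejector holds 1, a decision because
   k <= n - n_r. Up to a null set, the undecided event is therefore contained in the event that at
   most n/2 agents start with 1, i.e. that the sum of the followers' spins +1/-1 is at most n_r - n_c.
   This sum has mean 0 and variance m = n - n_c - n_r, so for n_c > n_r Cantelli's inequality bounds
   the probability by m / (m + (n_c - n_r)^2), which is below the stated bound; for n_c <= n_r the
   stated bound is at least 1. *)

definition kind_consistent :: "(nat \<Rightarrow> agent_kind) \<Rightarrow> (nat \<Rightarrow> bool) \<Rightarrow> bool" where
  "kind_consistent kind x \<longleftrightarrow>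
     (\<forall>i. kind i = Rejector \<longrightarrow> \<not> x i) \<and> (\<forall>i. kind i = Consentor \<longrightarrow> x i)"

lemma kind_consistent_init_op: "kind_consistent kind (init_op kind b)"
  unfolding kind_consistent_def init_op_def by simp

lemma kind_consistent_update:
  "kind_consistent kind x \<Longrightarrow> kind_consistent kind (update n kind x j)"
  unfolding kind_consistent_def update_def by simp

lemma kind_consistent_traj: "kind_consistent kind (traj n kind b \<omega> t)"
  by (induction t) (simp_all add: kind_consistent_init_op kind_consistent_update)

lemma card_zeros: "card {i. i < n \<and> \<not> x i} = n - ones n x"
proof -
  have "{i. i < n \<and> \<not> x i} = {..<n} - {i. i < n \<and> x i}" by auto
  moreover have "card ({..<n} - {i. i < n \<and> x i}) = n - card {i. i < n \<and> x i}"
    by (subst card_Diff_subset) auto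
  ultimately show ?thesis unfolding ones_def by simp
qed

lemma update_follower_majority:
  assumes majority: "n < 2 * ones n x" and "j < n" and "kind j = Follower"
  shows "update n kind x j j"
proof -
  have others: "card {i. i < n \<and> i \<noteq> j \<and> P i} = card {i. i < n \<and> P i} - (if P j then 1 else 0)"
    for P :: "nat \<Rightarrow> bool"
  proof -
    have "{i. i < n \<and> i \<noteq> j \<and> P i} = {i. i < n \<and> P i} - {j}" by auto
    then show ?thesis using \<open>j < n\<close> by (simp add: card_Diff_singleton_if)
  qed
  have "ones n x \<le> n"
    unfolding ones_def using card_mono[of "{..<n}" "{i. i < n \<and> x i}"] by auto
  then show ?thesis
    using majority \<open>kind j = Follower\<close>
    unfolding update_def Let_def others card_zeros ones_def[symmetric] by auto
qed

lemma update_supporters_mono: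
  assumes "kind_consistent kind x" and "n < 2 * ones n x"
  shows "{i. i < n \<and> x i} \<subseteq> {i. i < n \<and> update n kind x j i}"
  using assms update_follower_majority[of n x j kind]
  by (cases "kind j") (auto simp: update_def kind_consistent_def)

lemma traj_majority_persists:
  assumes "n < 2 * ones n (init_op kind b)"
  shows "n < 2 * ones n (traj n kind b \<omega> t)"
proof (induction t)
  case (Suc t)
  have "ones n (traj n kind b \<omega> t) \<le> ones n (traj n kind b \<omega> (Suc t))"
    unfolding ones_def using update_supporters_mono[OF kind_consistent_traj Suc]
    by (intro card_mono) auto
  with Suc show ?case by linarith
qed (use assms in simp)

lemma incseq_traj_supporters:
  assumes "n < 2 * ones n (init_op kind b)"
  shows "incseq (\<lambda>t. {i. i < n \<and> traj n kind b \<omega> t i})"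
  using update_supporters_mono[OF kind_consistent_traj traj_majority_persists[OF assms]]
  by (intro incseq_SucI) simp

lemma eventually_nonrejectors_agree:
  assumes majority: "n < 2 * ones n (init_op kind b)" and visits: "\<forall>i<n. \<exists>t. \<omega> !! t = i"
  shows "eventually (\<lambda>t. \<forall>i\<in>{i. i < n \<and> kind i \<noteq> Rejector}. traj n kind b \<omega> t i) sequentially"
proof (intro eventually_ball_finite ballI)
  fix i assume i: "i \<in> {i. i < n \<and> kind i \<noteq> Rejector}"
  obtain s where "traj n kind b \<omega> s i"
  proof (cases "kind i")
    case Consentor
    then show ?thesis using that kind_consistent_traj unfolding kind_consistent_def by blast
  next
    case Follower
    obtain t where "\<omega> !! t = i" using visits i by blast
    then show ?thesis
      using that[of "Suc t"] update_follower_majority[OF traj_majority_persists[OF majority]] i Follower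
      by simp
  qed (use i in simp)
  then have "traj n kind b \<omega> t i" if "s \<le> t" for t
    using incseq_traj_supporters[OF majority, THEN incseqD, OF that] i by blast
  then show "eventually (\<lambda>t. traj n kind b \<omega> t i) sequentially"
    by (rule eventually_sequentiallyI)
qed simp

lemma card_nonrejectors: "card {i. i < n \<and> kind i \<noteq> Rejector} = n - num_kind n kind Rejector"
proof -
  have "{i. i < n \<and> kind i \<noteq> Rejector} = {..<n} - {i. i < n \<and> kind i = Rejector}" by auto
  moreover have "card ({..<n} - {i. i < n \<and> kind i = Rejector}) = n - card {i. i < n \<and> kind i = Rejector}"
    by (subst card_Diff_subset) auto
  ultimately show ?thesis unfolding num_kind_def by simp
qed

lemma no_decision_subset:
  assumes "k \<le> n - num_kind n kind Rejector"
  shows "no_decision n k kind \<subseteq>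
           {b. 2 * ones n (init_op kind b) \<le> n} \<times> UNIV \<union> UNIV \<times> {\<omega>. \<exists>i<n. \<forall>t. \<omega> !! t \<noteq> i}"
proof
  fix x assume "x \<in> no_decision n k kind"
  then obtain b \<omega> where x: "x = (b, \<omega>)" and undecided: "\<forall>t. ones n (traj n kind b \<omega> t) < k"
    unfolding no_decision_def by auto
  show "x \<in> {b. 2 * ones n (init_op kind b) \<le> n} \<times> UNIV \<union> UNIV \<times> {\<omega>. \<exists>i<n. \<forall>t. \<omega> !! t \<noteq> i}"
  proof (rule ccontr)
    assume "x \<notin> {b. 2 * ones n (init_op kind b) \<le> n} \<times> UNIV \<union> UNIV \<times> {\<omega>. \<exists>i<n. \<forall>t. \<omega> !! t \<noteq> i}"
    then have "n < 2 * ones n (init_op kind b)" and "\<forall>i<n. \<exists>t. \<omega> !! t = i"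
      unfolding x by auto
    then obtain t where "\<forall>i\<in>{i. i < n \<and> kind i \<noteq> Rejector}. traj n kind b \<omega> t i"
      using eventually_nonrejectors_agree[of n kind b \<omega>] by (auto simp: eventually_sequentially)
    then have "n - num_kind n kind Rejector \<le> ones n (traj n kind b \<omega> t)"
      unfolding ones_def card_nonrejectors[symmetric] by (intro card_mono) auto
    then show False
      using undecided assms by (metis leD order.strict_trans1)
  qed
qed

abbreviation fair_coins :: "'a set \<Rightarrow> ('a \<Rightarrow> bool) pmf" where
  "fair_coins I \<equiv> Pi_pmf I False (\<lambda>_. bernoulli_pmf (1/2))"

lemma traj_eq_if_prefix_eq:
  "(\<forall>s<t. \<omega> !! s = \<omega>' !! s) \<Longrightarrow> traj n kind b \<omega> t = traj n kind b \<omega>' t"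
  by (induction t) auto

lemma measurable_traj:
  "Measurable.pred (game_space n) (\<lambda>(b, \<omega>). P (traj n kind b \<omega> t))"
proof -
  \<comment> \<open>The configuration at time \<open>t\<close> depends on \<open>\<omega>\<close> only through the
    countably-valued \<open>stake t \<omega>\<close>.\<close>
  have prefix: "(\<lambda>(b, \<omega>). stake t \<omega>) \<in> measurable (game_space n) (count_space UNIV)"
    unfolding game_space_def by measurable
  have "Measurable.pred (game_space n) (\<lambda>(b, \<omega>). P (traj n kind b (xs @- sconst 0) t))"
    for xs :: "nat list"
  proof -
    have "Measurable.pred (measure_pmf (fair_coins {0..<n}))
        (\<lambda>b. P (traj n kind b (xs @- sconst 0) t))"
      by simp
    then show ?thesis unfolding game_space_def by measurable
  qed
  then have "Measurable.pred (game_space n)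
      (\<lambda>x. (\<lambda>xs (b, \<omega>). P (traj n kind b (xs @- sconst 0) t)) ((\<lambda>(b, \<omega>). stake t \<omega>) x) x)"
    by (rule measurable_compose_countable[OF _ prefix])
  moreover have "traj n kind b (stake t \<omega> @- sconst 0) t = traj n kind b \<omega> t" for b \<omega>
    by (rule traj_eq_if_prefix_eq) simp
  ultimately show ?thesis by (simp add: case_prod_beta)
qed

lemma no_decision_sets: "no_decision n k kind \<in> sets (game_space n)"
proof -
  have "no_decision n k kind = {x \<in> space (game_space n). \<forall>t. (\<lambda>(b, \<omega>). ones n (traj n kind b \<omega> t) < k) x}"
    unfolding no_decision_def by auto
  also have "\<dots> \<in> sets (game_space n)"
    using measurable_traj by measurable
  finally show ?thesis .
qed

lemma (in prob_space) stream_always_in_null: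
  assumes A: "A \<in> sets M" and "prob A < 1"
  shows "{\<omega> \<in> space (stream_space M). \<forall>t. \<omega> !! t \<in> A} \<in> null_sets (stream_space M)"
proof -
  interpret S: prob_space "stream_space M" by (rule prob_space_stream_space)
  \<comment> \<open>Splitting off the first element shows that the event has probability \<open>p = p * prob A\<close>.\<close>
  define always_in where "always_in \<omega> \<longleftrightarrow> (\<forall>t. \<omega> !! t \<in> A)" for \<omega>
  define E where "E = {\<omega> \<in> space (stream_space M). always_in \<omega>}"
  have E_sets: "E \<in> sets (stream_space M)" unfolding E_def always_in_def using A by measurable
  then have "ennreal (S.prob E) =
      (\<integral>\<^sup>+x. ennreal (S.prob {\<omega> \<in> space (stream_space M). always_in (x ## \<omega>)}) \<partial>M)"
    unfolding E_def by (rule prob_stream_space)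
  also have "\<dots> = (\<integral>\<^sup>+x. ennreal (S.prob E) * indicator A x \<partial>M)"
  proof (rule nn_integral_cong)
    fix x assume "x \<in> space M"
    then have "{\<omega> \<in> space (stream_space M). always_in (x ## \<omega>)} = (if x \<in> A then E else {})"
      by (auto simp: E_def always_in_def space_stream_space Stream_snth split: nat.splits)
    then show "ennreal (S.prob {\<omega> \<in> space (stream_space M). always_in (x ## \<omega>)})
        = ennreal (S.prob E) * indicator A x"
      by simp
  qed
  also have "\<dots> = ennreal (S.prob E * prob A)"
    using A by (simp add: nn_integral_cmult_indicator emeasure_eq_measure ennreal_mult)
  finally have "S.prob E * (1 - prob A) = 0"
    by (simp add: algebra_simps)
  then have "S.prob E = 0" using \<open>prob A < 1\<close> by simp
  then show ?thesis
    using E_sets unfolding E_def always_in_def by (auto simp: S.emeasure_eq_measure)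
qed

lemma stream_misses_null:
  assumes "finite A" and "A \<subseteq> set_pmf p"
  shows "{\<omega>. \<exists>x\<in>A. \<forall>t. \<omega> !! t \<noteq> x} \<in> null_sets (stream_space (measure_pmf p))"
proof -
  have "{\<omega>. \<exists>x\<in>A. \<forall>t. \<omega> !! t \<noteq> x}
      = (\<Union>x\<in>A. {\<omega> \<in> space (stream_space (measure_pmf p)). \<forall>t. \<omega> !! t \<in> - {x}})"
    by (auto simp: space_stream_space)
  also have "\<dots> \<in> null_sets (stream_space (measure_pmf p))"
  proof (rule null_sets_UN')
    fix x assume "x \<in> A"
    have "measure_pmf.prob p (- {x}) = 1 - pmf p x"
      using measure_pmf.prob_compl[of "{x}" p] by (simp add: Compl_eq_Diff_UNIV measure_pmf_single)
    also have "\<dots> < 1" using \<open>x \<in> A\<close> assms(2) by (auto simp: pmf_positive)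
    finally show "{\<omega> \<in> space (stream_space (measure_pmf p)). \<forall>t. \<omega> !! t \<in> - {x}}
        \<in> null_sets (stream_space (measure_pmf p))"
      by (intro measure_pmf.stream_always_in_null) simp
  qed (use assms(1) in \<open>rule countable_finite\<close>)
  finally show ?thesis .
qed

lemma (in pair_prob_space) prob_le_of_subset_Times_null:
  assumes X: "X \<in> sets (M1 \<Otimes>\<^sub>M M2)" and sub: "X \<subseteq> A \<times> space M2 \<union> space M1 \<times> N"
    and A: "A \<in> sets M1" and N: "N \<in> null_sets M2"
  shows "prob X \<le> M1.prob A"
proof -
  have "emeasure (M1 \<Otimes>\<^sub>M M2) X \<le> emeasure (M1 \<Otimes>\<^sub>M M2) (A \<times> space M2 \<union> space M1 \<times> N)"
    by (rule emeasure_mono[OF sub]) (use A N in auto)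
  also have "\<dots> = emeasure (M1 \<Otimes>\<^sub>M M2) (A \<times> space M2)"
    by (rule emeasure_Un_null_set) (use A N M2.times_in_null_sets2 in auto)
  also have "\<dots> = emeasure M1 A"
    using A by (simp add: M2.emeasure_pair_measure_Times M2.emeasure_space_1)
  finally show ?thesis by (simp add: emeasure_eq_measure M1.emeasure_eq_measure)
qed

lemma prob_no_decision_le_minority_start:
  assumes "0 < n" and "k \<le> n - num_kind n kind Rejector"
  shows "measure (game_space n) (no_decision n k kind)
           \<le> measure_pmf.prob (fair_coins {0..<n}) {b. 2 * ones n (init_op kind b) \<le> n}"
proof -
  interpret pair_prob_space "measure_pmf (fair_coins {0..<n})"
      "stream_space (measure_pmf (pmf_of_set {0..<n}))"
    by (intro pair_prob_space.intro pair_sigma_finite.intro prob_space_imp_sigma_finite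
        measure_pmf.prob_space_axioms prob_space.prob_space_stream_space)
  have null: "{\<omega>. \<exists>i<n. \<forall>t. \<omega> !! t \<noteq> i} \<in> null_sets (stream_space (measure_pmf (pmf_of_set {0..<n})))"
    using stream_misses_null[of "{0..<n}" "pmf_of_set {0..<n}"] \<open>0 < n\<close> by (simp add: Bex_def)
  have sub: "no_decision n k kind \<subseteq> {b. 2 * ones n (init_op kind b) \<le> n}
      \<times> space (stream_space (measure_pmf (pmf_of_set {0..<n})))
      \<union> space (measure_pmf (fair_coins {0..<n})) \<times> {\<omega>. \<exists>i<n. \<forall>t. \<omega> !! t \<noteq> i}"
    using no_decision_subset[OF assms(2)] by (simp add: space_stream_space)
  show ?thesis
    using no_decision_sets[of n k kind] unfolding game_space_def
    by (rule prob_le_of_subset_Times_null[OF _ sub[unfolded game_space_def] _ null]) simp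
qed

lemma (in prob_space) Cantelli_inequality:
  assumes [measurable]: "random_variable borel X"
    and square: "integrable M (\<lambda>x. X x ^ 2)" and mean: "expectation X = 0" and "0 < a"
  defines "v \<equiv> expectation (\<lambda>x. X x ^ 2)"
  shows "prob {x \<in> space M. a \<le> X x} \<le> v / (v + a^2)"
proof -
  \<comment> \<open>Markov's inequality for \<open>(X + c)\<^sup>2\<close>, with the optimal shift \<open>c\<close>.\<close>
  define c where "c = v / a"
  have "0 \<le> v" unfolding v_def by (simp add: integral_nonneg_AE)
  then have "0 \<le> c" using \<open>0 < a\<close> unfolding c_def by simp
  have "integrable M X" by (rule square_integrable_imp_integrable) (simp_all add: square)
  then have shifted: "integrable M (\<lambda>x. (X x + c)^2)"
    using square by (simp add: power2_sum)
  have "prob {x \<in> space M. a \<le> X x} \<le> prob {x \<in> space M. (a + c)^2 \<le> (X x + c)^2}"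
    using \<open>0 < a\<close> \<open>0 \<le> c\<close> by (intro finite_measure_mono) (auto intro!: power_mono)
  also have "\<dots> \<le> expectation (\<lambda>x. (X x + c)^2) / (a + c)^2"
    using \<open>0 < a\<close> \<open>0 \<le> c\<close> by (intro integral_Markov_inequality_measure shifted) auto
  also have "expectation (\<lambda>x. (X x + c)^2) = v + c^2"
    using square \<open>integrable M X\<close> mean
    by (simp add: power2_sum v_def prob_space)
  also have "(v + c^2) / (a + c)^2 = v / (v + a^2)"
  proof -
    have "v + c^2 = v * (v + a^2) / a^2" and "(a + c)^2 = (v + a^2)^2 / a^2"
      using \<open>0 < a\<close> unfolding c_def by (simp_all add: field_simps power2_eq_square)
    moreover have "0 < v + a^2" using \<open>0 < a\<close> \<open>0 \<le> v\<close> by (simp add: add_nonneg_pos)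
    ultimately show ?thesis using \<open>0 < a\<close> by (simp add: power2_eq_square)
  qed
  finally show ?thesis .
qed

definition spin :: "bool \<Rightarrow> real" where
  "spin v = (if v then 1 else -1)"

lemma sum_spin:
  assumes "finite F"
  shows "(\<Sum>i\<in>F. spin (b i)) = 2 * real (card {i\<in>F. b i}) - real (card F)"
proof -
  have "card F = card {i\<in>F. b i} + card {i\<in>F. \<not> b i}"
    using assms by (subst card_Un_disjoint[symmetric]) (auto intro: arg_cong[where f = card])
  then show ?thesis
    using assms by (simp add: spin_def sum.If_cases Int_def)
qed

lemma integrable_fair_coins: "finite I \<Longrightarrow> integrable (fair_coins I) (f :: _ \<Rightarrow> real)"
  by (rule integrable_measure_pmf_finite) (simp add: set_Pi_pmf finite_PiE_dflt)

lemma expectation_spin: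
  assumes "finite I" and "i \<in> I"
  shows "measure_pmf.expectation (fair_coins I) (\<lambda>b. spin (b i)) = 0"
proof -
  have "measure_pmf.expectation (fair_coins I) (\<lambda>b. spin (b i))
      = measure_pmf.expectation (map_pmf (\<lambda>b. b i) (fair_coins I)) spin"
    by simp
  also have "map_pmf (\<lambda>b. b i) (fair_coins I) = bernoulli_pmf (1/2)"
    using assms by (simp add: Pi_pmf_component)
  finally show ?thesis by (simp add: spin_def)
qed

lemma expectation_spin_mult:
  assumes "finite I" and "i \<in> I" "j \<in> I" "i \<noteq> j"
  shows "measure_pmf.expectation (fair_coins I) (\<lambda>b. spin (b i) * spin (b j)) = 0"
proof -
  have "prob_space.indep_vars (fair_coins I) (\<lambda>_. borel) (\<lambda>k b. spin (b k)) I"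
    by (rule prob_space.indep_vars_compose2[OF measure_pmf.prob_space_axioms indep_vars_Pi_pmf[OF \<open>finite I\<close>]]) simp
  then have "prob_space.indep_vars (fair_coins I) (\<lambda>_. borel) (\<lambda>k b. spin (b k)) {i, j}"
    by (rule prob_space.indep_vars_subset[OF measure_pmf.prob_space_axioms]) (use assms in auto)
  then have "measure_pmf.expectation (fair_coins I) (\<lambda>b. \<Prod>k\<in>{i, j}. spin (b k))
      = (\<Prod>k\<in>{i, j}. measure_pmf.expectation (fair_coins I) (\<lambda>b. spin (b k)))"
    by (intro prob_space.indep_vars_lebesgue_integral[OF measure_pmf.prob_space_axioms] integrable_fair_coins \<open>finite I\<close>) simp
  then show ?thesis using assms by (simp add: expectation_spin)
qed

lemma expectation_spin_sum_square:
  assumes "finite I" and "F \<subseteq> I"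
  shows "measure_pmf.expectation (fair_coins I) (\<lambda>b. (\<Sum>i\<in>F. spin (b i))^2) = real (card F)"
proof -
  have "finite F" using assms finite_subset by blast
  have "measure_pmf.expectation (fair_coins I) (\<lambda>b. (\<Sum>i\<in>F. spin (b i))^2)
      = (\<Sum>i\<in>F. \<Sum>j\<in>F. measure_pmf.expectation (fair_coins I) (\<lambda>b. spin (b i) * spin (b j)))"
    by (simp add: power2_eq_square sum_product integrable_fair_coins \<open>finite I\<close>)
  also have "\<dots> = (\<Sum>i\<in>F. \<Sum>j\<in>F. if i = j then 1 else 0)"
  proof (intro sum.cong refl)
    fix i j assume "i \<in> F" "j \<in> F"
    moreover have "spin v * spin v = 1" for v by (simp add: spin_def)
    ultimately show "measure_pmf.expectation (fair_coins I) (\<lambda>b. spin (b i) * spin (b j))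
        = (if i = j then 1 else 0)"
      using assms expectation_spin_mult[of I i j] by auto
  qed
  also have "\<dots> = real (card F)" using \<open>finite F\<close> by simp
  finally show ?thesis .
qed

lemma expectation_spin_sum:
  assumes "finite I" and "F \<subseteq> I"
  shows "measure_pmf.expectation (fair_coins I) (\<lambda>b. \<Sum>i\<in>F. spin (b i)) = 0"
  using assms by (simp add: integrable_fair_coins expectation_spin subset_iff)

lemma num_kind_sum: "num_kind n kind Rejector + num_kind n kind Consentor + num_kind n kind Follower = n"
proof -
  have "{..<n} = {i. i < n \<and> kind i = Rejector}
      \<union> ({i. i < n \<and> kind i = Consentor} \<union> {i. i < n \<and> kind i = Follower})"
  proof (rule set_eqI)
    fix i show "i \<in> {..<n} \<longleftrightarrow> i \<in> {i. i < n \<and> kind i = Rejector}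
      \<union> ({i. i < n \<and> kind i = Consentor} \<union> {i. i < n \<and> kind i = Follower})"
      by (cases "kind i") auto
  qed
  then have "n = card ({i. i < n \<and> kind i = Rejector}
      \<union> ({i. i < n \<and> kind i = Consentor} \<union> {i. i < n \<and> kind i = Follower}))"
    by (metis card_lessThan)
  also have "\<dots> = num_kind n kind Rejector + (num_kind n kind Consentor + num_kind n kind Follower)"
    unfolding num_kind_def by (subst card_Un_disjoint; auto)+
  finally show ?thesis by simp
qed

lemma ones_init_op:
  "ones n (init_op kind b)
     = num_kind n kind Consentor + card {i \<in> {i. i < n \<and> kind i = Follower}. b i}"
proof -
  have "{i. i < n \<and> init_op kind b i}
      = {i. i < n \<and> kind i = Consentor} \<union> {i \<in> {i. i < n \<and> kind i = Follower}. b i}"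
  proof (rule set_eqI)
    fix i show "i \<in> {i. i < n \<and> init_op kind b i}
        \<longleftrightarrow> i \<in> {i. i < n \<and> kind i = Consentor} \<union> {i \<in> {i. i < n \<and> kind i = Follower}. b i}"
      by (cases "kind i") (auto simp: init_op_def)
  qed
  then have "ones n (init_op kind b)
      = card ({i. i < n \<and> kind i = Consentor} \<union> {i \<in> {i. i < n \<and> kind i = Follower}. b i})"
    unfolding ones_def by simp
  also have "\<dots> = num_kind n kind Consentor + card {i \<in> {i. i < n \<and> kind i = Follower}. b i}"
    unfolding num_kind_def by (rule card_Un_disjoint) auto
  finally show ?thesis .
qed

lemma prob_minority_start:
  fixes n :: nat and kind :: "nat \<Rightarrow> agent_kind"
  defines "nr \<equiv> num_kind n kind Rejector" and "nc \<equiv> num_kind n kind Consentor"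
    and "m \<equiv> num_kind n kind Follower"
  assumes "nr < nc"
  shows "measure_pmf.prob (fair_coins {0..<n}) {b. 2 * ones n (init_op kind b) \<le> n}
           \<le> real m / (real m + (real nc - real nr)^2)"
proof -
  define F where "F = {i. i < n \<and> kind i = Follower}"
  define X where "X b = - (\<Sum>i\<in>F. spin (b i))" for b
  have F: "F \<subseteq> {0..<n}" "finite F" and m: "m = card F"
    unfolding F_def m_def num_kind_def by auto
  have n: "n = nr + nc + card F"
    using num_kind_sum[of n kind] m unfolding nr_def nc_def m_def by linarith
  have "{b. 2 * ones n (init_op kind b) \<le> n} \<subseteq> {b. real nc - real nr \<le> X b}"
  proof clarify
    fix b assume "2 * ones n (init_op kind b) \<le> n"
    then have "2 * (nc + card {i \<in> F. b i}) \<le> n"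
      unfolding ones_init_op nc_def F_def .
    then have "2 * (real nc + real (card {i \<in> F. b i})) \<le> real nr + real nc + real (card F)"
      unfolding n by (metis of_nat_add of_nat_le_iff of_nat_mult of_nat_numeral)
    then show "real nc - real nr \<le> X b"
      unfolding X_def sum_spin[OF F(2)] by (simp add: algebra_simps)
  qed
  then have "measure_pmf.prob (fair_coins {0..<n}) {b. 2 * ones n (init_op kind b) \<le> n}
      \<le> measure_pmf.prob (fair_coins {0..<n}) {b. real nc - real nr \<le> X b}"
    by (rule measure_pmf.finite_measure_mono) simp
  also have "\<dots> \<le> real m / (real m + (real nc - real nr)^2)"
  proof -
    have "measure_pmf.expectation (fair_coins {0..<n}) X = 0"
      using expectation_spin_sum[OF _ F(1)] by (simp add: X_def[abs_def])
    moreover have "measure_pmf.expectation (fair_coins {0..<n}) (\<lambda>b. X b ^ 2) = real m"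
      using expectation_spin_sum_square[OF _ F(1)] by (simp add: X_def m)
    ultimately show ?thesis
      using measure_pmf.Cantelli_inequality[where M = "fair_coins {0..<n}" and X = X
          and a = "real nc - real nr"] assms(4)
      by (simp add: integrable_fair_coins)
  qed
  finally show ?thesis .
qed

(* The bound of the theorem for m followers, c consentors and r rejectors, i.e. n = m + c + r. *)
definition undecided_bound :: "real \<Rightarrow> real \<Rightarrow> real \<Rightarrow> real" where
  "undecided_bound m c r = (m * (m + 2 * c + 2 * r - 1) + 4 * c * r) / (4 * c * (m + r))"

lemma one_le_undecided_bound:
  assumes "1 \<le> m" and "0 < c" and "c \<le> r"
  shows "1 \<le> undecided_bound m c r"
proof -
  have "4 * c * m \<le> m * (m + 2 * c + 2 * r - 1)"
    using assms mult_left_mono[of "4 * c" "m + 2 * c + 2 * r - 1" m] by (simp add: mult.commute)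
  moreover have "0 < 4 * c * (m + r)" using assms by simp
  ultimately show ?thesis
    unfolding undecided_bound_def by (simp add: le_divide_eq algebra_simps)
qed

lemma Cantelli_bound_le_undecided_bound:
  assumes "0 < m" and "0 \<le> r" and "r + 1 \<le> c"
  shows "m / (m + (c - r)^2) \<le> undecided_bound m c r"
proof -
  define a where "a = c - r"
  have "1 \<le> a" using assms unfolding a_def by simp
  have "(m * (m + 2 * c + 2 * r - 1) + 4 * c * r) * (m + a^2) - m * (4 * c * (m + r))
      = m * ((m - 1)^2 + (a - 1)^2 * m + (a - 1) * (2 * a^2 + a + 1))
        + 4 * a^2 * r * m + 4 * a^2 * r^2 + 4 * a^3 * r"
    unfolding a_def by (simp add: algebra_simps power2_eq_square power3_eq_cube)
  also have "\<dots> \<ge> 0"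
    using assms \<open>1 \<le> a\<close> by (intro add_nonneg_nonneg mult_nonneg_nonneg) auto
  finally have "m * (4 * c * (m + r)) \<le> (m * (m + 2 * c + 2 * r - 1) + 4 * c * r) * (m + a^2)"
    by simp
  moreover have "0 < m + a^2" "0 < 4 * c * (m + r)" using assms by (auto simp: add_pos_nonneg)
  ultimately show ?thesis
    unfolding undecided_bound_def a_def[symmetric] by (simp add: divide_le_eq le_divide_eq mult.commute)
qed

lemma prob_minority_start_le_undecided_bound:
  fixes n :: nat and kind :: "nat \<Rightarrow> agent_kind"
  defines "nr \<equiv> num_kind n kind Rejector" and "nc \<equiv> num_kind n kind Consentor"
    and "m \<equiv> num_kind n kind Follower"
  assumes "1 \<le> m" and "0 < nc"
  shows "measure_pmf.prob (fair_coins {0..<n}) {b. 2 * ones n (init_op kind b) \<le> n}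
           \<le> undecided_bound m nc nr"
proof (cases "nr < nc")
  case True
  have "measure_pmf.prob (fair_coins {0..<n}) {b. 2 * ones n (init_op kind b) \<le> n}
      \<le> real m / (real m + (real nc - real nr)^2)"
    using prob_minority_start[of n kind] True unfolding nr_def nc_def m_def .
  also have "\<dots> \<le> undecided_bound m nc nr"
    by (rule Cantelli_bound_le_undecided_bound) (use assms True in auto)
  finally show ?thesis .
next
  case False
  have "measure_pmf.prob (fair_coins {0..<n}) {b. 2 * ones n (init_op kind b) \<le> n} \<le> 1"
    by (rule measure_pmf.prob_le_1)
  also have "1 \<le> undecided_bound m nc nr"
    by (rule one_le_undecided_bound) (use assms False in auto)
  finally show ?thesis .
qed

theorem theorem2:
  fixes n k :: nat and kind :: "nat \<Rightarrow> agent_kind"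
  defines "nr \<equiv> num_kind n kind Rejector"
      and "nc \<equiv> num_kind n kind Consentor"
  assumes followers: "n - nr - nc \<ge> 2"
      and nc_pos: "0 < nc"
      and k_lo: "nc < k" and k_hi: "k \<le> n - nr"
  shows "no_decision n k kind \<in> sets (game_space n)
         \<and> measure (game_space n) (no_decision n k kind)
             \<le> (real (n - nc - nr) * (real n + real nc + real nr - 1) + 4 * real nc * real nr)
                / (4 * real nc * real (n - nc))"
proof -
  define m where "m = num_kind n kind Follower"
  have n: "n = nr + nc + m" using num_kind_sum[of n kind] unfolding nr_def nc_def m_def by simp
  have "2 \<le> m" using followers n by simp
  have "measure (game_space n) (no_decision n k kind)
      \<le> measure_pmf.prob (fair_coins {0..<n}) {b. 2 * ones n (init_op kind b) \<le> n}"
    by (rule prob_no_decision_le_minority_start) (use \<open>2 \<le> m\<close> n k_hi[unfolded nr_def] in auto)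
  also have "\<dots> \<le> undecided_bound m nc nr"
    using prob_minority_start_le_undecided_bound[of n kind] \<open>2 \<le> m\<close> nc_pos
    unfolding nr_def nc_def m_def by simp
  also have "undecided_bound m nc nr
      = (real (n - nc - nr) * (real n + real nc + real nr - 1) + 4 * real nc * real nr)
        / (4 * real nc * real (n - nc))"
    unfolding undecided_bound_def n by (simp add: algebra_simps)
  finally show ?thesis using no_decision_sets by simp
qed

end
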